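(* Let $\mu>0$ and $0<\beta<1$. Let $g:\mathbb{C}\to\mathbb{R}$ be given by $g(x)=\frac{\mu+|x|^2}{2}$ for $|x|\ge\sqrt{\mu}$ and $g(x)=\sqrt{\mu}|x|$ for $|x|\le\sqrt{\mu}$. Suppose $z_0\in\partial g(x_0)$ and $|z_0|>\sqrt{\mu}/\beta^2$. Then for all $x_1\in\mathbb{C}$ with $x_1\neq x_0$ and all $z_1\in\partial g(x_1)$, $$\mathrm{Re}\big((z_1-z_0)\overline{(x_1-x_0)}\big)>(1-\beta^2)|x_1-x_0|^2.$$
   Context: $\partial g$ is the convex subdifferential (with $\mathbb{C}$ regarded as $\mathbb{R}^2$ with inner product $\mathrm{Re}(z\bar w)$); explicitly $\partial g(x)=\{x\}$ if $|x|\ge\sqrt\mu$, $\partial g(x)=\{\sqrt{\mu}\,x/|x|\}$ if $0<|x|\le\sqrt\mu$, and $\partial g(0)=\sqrt{\mu}\,\mathbb{D}$, where $\mathbb{D}$ is the closed unit disc. (In the paper $\beta$ is the constant $\beta_N=\inf\{\|Ax\|_2/\|x\|_2:x\ne0,\mathrm{card}(x)\le N\}$ of a matrix $A$, assumed to satisfy $0<\beta_N<1$; only its value matters here.) *)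

theory Defs
  imports "HOL-Analysis.Analysis"
begin

definition gfun :: "real \<Rightarrow> complex \<Rightarrow> real" where
  "gfun \<mu> x = (if cmod x \<ge> sqrt \<mu> then (\<mu> + (cmod x)^2) / 2 else sqrt \<mu> * cmod x)"

text \<open>Convex subdifferential of a real function on C, viewing C as R^2 with the
  inner product Re(z * cnj w).\<close>
definition subdiff :: "(complex \<Rightarrow> real) \<Rightarrow> complex \<Rightarrow> complex set" where
  "subdiff f x = {z. \<forall>y. f y \<ge> f x + Re (z * cnj (y - x))}"

end

theory Submission
  imports Defs
begin

text \<open>Outside the disc of radius \<open>sqrt \<mu>\<close> the function \<open>gfun \<mu>\<close> is the smooth
  function \<open>(\<mu> + |x|^2)/2\<close>, so a subgradient at an outer point \<open>x\<^sub>0\<close> must be \<open>x\<^sub>0\<close>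
  itself; inside the disc every subgradient has norm at most \<open>sqrt \<mu>\<close>, so the hypothesis
  \<open>|z\<^sub>0| > sqrt \<mu> / \<beta>^2\<close> forces \<open>z\<^sub>0 = x\<^sub>0\<close> with \<open>\<beta>^2 |x\<^sub>0| > sqrt \<mu>\<close>.
  Writing \<open>z\<^sub>1 - x\<^sub>0 = (z\<^sub>1 - x\<^sub>1) + (x\<^sub>1 - x\<^sub>0)\<close>, the claim reduces to
  \<open>(z\<^sub>1 - x\<^sub>1) \<bullet> (x\<^sub>1 - x\<^sub>0) > -\<beta>^2 |x\<^sub>1 - x\<^sub>0|^2\<close>. The left side vanishes
  for outer \<open>x\<^sub>1\<close>; for inner \<open>x\<^sub>1\<close>, where \<open>z\<^sub>1 - x\<^sub>1\<close> points along \<open>x\<^sub>1\<close> with length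
  at most \<open>sqrt \<mu> - |x\<^sub>1|\<close>, it is at least \<open>-(sqrt \<mu> - |x\<^sub>1|)(|x\<^sub>0| - |x\<^sub>1|)\<close>, and
  \<open>\<beta>^2 (|x\<^sub>0| - |x\<^sub>1|) > sqrt \<mu> - |x\<^sub>1|\<close>.\<close>

lemma Re_mult_cnj_eq_inner: "Re (z * cnj w) = z \<bullet> w"
  by (simp add: inner_complex_def)

lemma subdiff_iff_inner: "z \<in> subdiff f x \<longleftrightarrow> (\<forall>y. f x + z \<bullet> (y - x) \<le> f y)"
  by (simp only: subdiff_def Re_mult_cnj_eq_inner mem_Collect_eq)

lemma power2_norm_add_eq: "(norm (x + h))\<^sup>2 = (norm x)\<^sup>2 + 2 * (x \<bullet> h) + (norm h)\<^sup>2"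
  by (simp add: power2_norm_eq_inner inner_simps inner_commute)

lemma subgradient_eq_of_quadratic_majorant:
  fixes f :: "'a::real_inner \<Rightarrow> real"
  assumes minorant: "\<And>y. f x + z \<bullet> (y - x) \<le> f y"
    and majorant: "\<And>y. norm (y - x) < \<delta> \<Longrightarrow> f y \<le> f x + w \<bullet> (y - x) + C * (norm (y - x))\<^sup>2"
    and "\<delta> > 0"
  shows "z = w"
proof (rule ccontr)
  define v where "v = z - w"
  assume "z \<noteq> w"
  then have v: "norm v > 0"
    by (simp add: v_def)
  have "\<delta> / norm v > 0" "1 / (\<bar>C\<bar> + 1) > 0"
    using v \<open>\<delta> > 0\<close> by (simp_all add: add_nonneg_pos)
  then obtain t where t: "0 < t" "t < \<delta> / norm v" "t < 1 / (\<bar>C\<bar> + 1)"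
    using field_lbound_gt_zero by blast
  have "norm (t *\<^sub>R v) < \<delta>"
    using t v by (simp add: pos_less_divide_eq)
  then have "z \<bullet> (t *\<^sub>R v) - w \<bullet> (t *\<^sub>R v) \<le> C * (norm (t *\<^sub>R v))\<^sup>2"
    using minorant[of "x + t *\<^sub>R v"] majorant[of "x + t *\<^sub>R v"] by simp
  moreover have "z \<bullet> v - w \<bullet> v = v \<bullet> v"
    by (simp add: v_def inner_diff_left)
  ultimately have "t * (v \<bullet> v) \<le> C * (t * norm v)\<^sup>2"
    using t(1) by (simp add: right_diff_distrib[symmetric])
  then have "t * (norm v)\<^sup>2 \<le> t * ((C * t) * (norm v)\<^sup>2)"
    by (simp add: dot_square_norm power2_eq_square algebra_simps)
  then have "(norm v)\<^sup>2 \<le> (C * t) * (norm v)\<^sup>2"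
    using t(1) by simp
  moreover have "C * t < 1"
  proof -
    have "t * (\<bar>C\<bar> + 1) < 1"
      using t(3) by (simp add: less_divide_eq add_nonneg_pos)
    then have "t * \<bar>C\<bar> + t < 1"
      by (simp add: distrib_left)
    moreover have "C * t \<le> t * \<bar>C\<bar>"
      using t(1) by (simp add: mult.commute)
    ultimately show ?thesis
      using t(1) by linarith
  qed
  ultimately show False
    using v by (simp add: mult_le_cancel_right2)
qed

lemma gfun_le_quadratic:
  assumes "\<mu> \<ge> 0"
  shows "gfun \<mu> y \<le> (\<mu> + (cmod y)\<^sup>2) / 2"
  using sum_squares_bound[of "sqrt \<mu>" "cmod y"] assms by (simp add: gfun_def)

lemma subdiff_gfun_outer:
  assumes "\<mu> \<ge> 0" "cmod x \<ge> sqrt \<mu>" "z \<in> subdiff (gfun \<mu>) x"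
  shows "z = x"
proof (rule subgradient_eq_of_quadratic_majorant[where \<delta> = 1 and C = "1/2"])
  show "gfun \<mu> x + z \<bullet> (y - x) \<le> gfun \<mu> y" for y
    using assms(3) by (simp add: subdiff_iff_inner)
  have "gfun \<mu> x = (\<mu> + (cmod x)\<^sup>2) / 2"
    using assms(2) by (simp add: gfun_def)
  then show "gfun \<mu> y \<le> gfun \<mu> x + x \<bullet> (y - x) + 1/2 * (cmod (y - x))\<^sup>2" for y
    using gfun_le_quadratic[OF assms(1), of y] power2_norm_add_eq[of x "y - x"] by simp
qed simp

lemma subdiff_gfun_inner:
  assumes "cmod x < sqrt \<mu>" "x \<noteq> 0" "z \<in> subdiff (gfun \<mu>) x"
  shows "z = (sqrt \<mu> / cmod x) *\<^sub>R x"
proof (rule subgradient_eq_of_quadratic_majorant[where \<delta> = "sqrt \<mu> - cmod x"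
      and C = "sqrt \<mu> / (2 * cmod x)"])
  have x: "cmod x > 0"
    using assms(2) by simp
  have "sqrt \<mu> > 0"
    using assms(1) x by linarith
  show "gfun \<mu> x + z \<bullet> (y - x) \<le> gfun \<mu> y" for y
    using assms(3) by (simp add: subdiff_iff_inner)
  show "sqrt \<mu> - cmod x > 0"
    using assms(1) by simp
  fix y
  assume "cmod (y - x) < sqrt \<mu> - cmod x"
  then have "cmod y < sqrt \<mu>"
    using norm_triangle_ineq[of x "y - x"] by simp
  then have "gfun \<mu> y = sqrt \<mu> * cmod y"
    by (simp add: gfun_def)
  also have "\<dots> \<le> sqrt \<mu> * (((cmod x)\<^sup>2 + (cmod y)\<^sup>2) / (2 * cmod x))"
    using sum_squares_bound[of "cmod x" "cmod y"] x \<open>sqrt \<mu> > 0\<close>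
    by (intro mult_left_mono) (simp_all add: pos_le_divide_eq mult_ac)
  also have "\<dots> = gfun \<mu> x + ((sqrt \<mu> / cmod x) *\<^sub>R x) \<bullet> (y - x)
      + sqrt \<mu> / (2 * cmod x) * (cmod (y - x))\<^sup>2"
    using power2_norm_add_eq[of x "y - x"] assms(1) x
    by (simp add: gfun_def field_simps power2_eq_square)
  finally show "gfun \<mu> y \<le> gfun \<mu> x + ((sqrt \<mu> / cmod x) *\<^sub>R x) \<bullet> (y - x)
      + sqrt \<mu> / (2 * cmod x) * (cmod (y - x))\<^sup>2" .
qed

lemma norm_subdiff_gfun_zero:
  assumes "\<mu> > 0" "z \<in> subdiff (gfun \<mu>) 0"
  shows "cmod z \<le> sqrt \<mu>"
proof (cases "z = 0")
  case False
  define y where "y = (sqrt \<mu> / cmod z) *\<^sub>R z"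
  have "cmod y = sqrt \<mu>"
    using False assms(1) by (simp add: y_def)
  then have "gfun \<mu> y = \<mu>"
    using assms(1) by (simp add: gfun_def)
  moreover have "gfun \<mu> 0 + z \<bullet> y \<le> gfun \<mu> y"
    using assms(2) by (simp add: subdiff_iff_inner)
  ultimately have "sqrt \<mu> * cmod z \<le> sqrt \<mu> * sqrt \<mu>"
    using False assms(1) by (simp add: y_def gfun_def dot_square_norm power2_eq_square)
  then show ?thesis
    using assms(1) by (meson mult_le_cancel_left_pos real_sqrt_gt_zero)
qed (use assms in simp)

lemma norm_subdiff_gfun_inside:
  assumes "cmod x < sqrt \<mu>" "z \<in> subdiff (gfun \<mu>) x"
  shows "cmod z \<le> sqrt \<mu>"
proof (cases "x = 0")
  case True
  have "\<mu> > 0"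
    using assms(1) True by simp
  with True show ?thesis
    using norm_subdiff_gfun_zero assms(2) by blast
next
  case False
  have "sqrt \<mu> > 0"
    using assms(1) norm_ge_zero[of x] by linarith
  then show ?thesis
    using subdiff_gfun_inner[OF assms(1) False assms(2)] False by simp
qed

lemma inner_subdiff_gfun_inside_ge:
  assumes "cmod x < sqrt \<mu>" "z \<in> subdiff (gfun \<mu>) x"
  shows "(z - x) \<bullet> (x - u) \<ge> - (sqrt \<mu> - cmod x) * (cmod u - cmod x)"
proof (cases "x = 0")
  case True
  then have "- (z \<bullet> u) \<ge> - (cmod z * cmod u)"
    using Cauchy_Schwarz_ineq2[of z u] by simp
  moreover have "cmod z * cmod u \<le> sqrt \<mu> * cmod u"
    using norm_subdiff_gfun_inside assms by (simp add: mult_right_mono)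
  ultimately show ?thesis
    using True by (simp add: inner_diff_right)
next
  case False
  define r where "r = cmod x"
  have r: "r > 0" "r < sqrt \<mu>"
    using False assms(1) by (simp_all add: r_def)
  have "z - x = ((sqrt \<mu> - r) / r) *\<^sub>R x"
    using subdiff_gfun_inner[OF assms(1) False assms(2)] r by (simp add: r_def scaleR_diff_left diff_divide_distrib)
  have "- (sqrt \<mu> - r) * (cmod u - r) = ((sqrt \<mu> - r) / r) * (r\<^sup>2 - r * cmod u)"
    using r by (simp add: field_simps power2_eq_square)
  also have "\<dots> \<le> ((sqrt \<mu> - r) / r) * (r\<^sup>2 - x \<bullet> u)"
    using Cauchy_Schwarz_ineq2[of x u] r by (intro mult_left_mono) (auto simp: r_def)
  also have "\<dots> = (z - x) \<bullet> (x - u)"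
    using \<open>z - x = ((sqrt \<mu> - r) / r) *\<^sub>R x\<close>
    by (simp add: inner_diff_right dot_square_norm r_def right_diff_distrib diff_divide_distrib)
  finally show ?thesis
    by (simp add: r_def)
qed

lemma inner_subdiff_gfun_diff_gt:
  assumes "\<mu> \<ge> 0" "0 < b" "b \<le> 1" "b * cmod x\<^sub>0 > sqrt \<mu>"
    and "x\<^sub>1 \<noteq> x\<^sub>0" "z\<^sub>1 \<in> subdiff (gfun \<mu>) x\<^sub>1"
  shows "(z\<^sub>1 - x\<^sub>0) \<bullet> (x\<^sub>1 - x\<^sub>0) > (1 - b) * (cmod (x\<^sub>1 - x\<^sub>0))\<^sup>2"
proof -
  define d where "d = cmod (x\<^sub>1 - x\<^sub>0)"
  have d: "d > 0"
    using assms(5) by (simp add: d_def)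
  have split: "(z\<^sub>1 - x\<^sub>0) \<bullet> (x\<^sub>1 - x\<^sub>0) = (z\<^sub>1 - x\<^sub>1) \<bullet> (x\<^sub>1 - x\<^sub>0) + d\<^sup>2"
    by (simp add: d_def inner_diff_left dot_square_norm[symmetric] algebra_simps)
  show ?thesis
  proof (cases "cmod x\<^sub>1 \<ge> sqrt \<mu>")
    case True
    then have "z\<^sub>1 = x\<^sub>1"
      using subdiff_gfun_outer assms(1,6) by blast
    then show ?thesis
      using split d assms(2) by (simp add: d_def[symmetric])
  next
    case False
    define r R where "r = cmod x\<^sub>1" and "R = cmod x\<^sub>0"
    have "b * r \<le> r"
      unfolding r_def using assms(2,3) by (intro mult_left_le_one_le) auto
    then have gap: "sqrt \<mu> - r < b * (R - r)"
      using assms(4) by (simp add: R_def right_diff_distrib)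
    have "b * R \<le> R"
      unfolding R_def using assms(2,3) by (intro mult_left_le_one_le) auto
    then have "R - r > 0"
      using assms(4) False by (simp add: r_def R_def)
    have "R - r \<le> d"
      using norm_triangle_ineq2[of x\<^sub>0 x\<^sub>1] by (simp add: r_def R_def d_def norm_minus_commute)
    have "(sqrt \<mu> - r) * (R - r) < b * (R - r) * (R - r)"
      using gap \<open>R - r > 0\<close> by (rule mult_strict_right_mono)
    also have "\<dots> \<le> b * d\<^sup>2"
      using \<open>R - r \<le> d\<close> \<open>R - r > 0\<close> assms(2)
      by (simp add: power2_eq_square mult.assoc mult_left_mono mult_mono)
    finally have "(sqrt \<mu> - r) * (R - r) < b * d\<^sup>2" .
    moreover have "(z\<^sub>1 - x\<^sub>1) \<bullet> (x\<^sub>1 - x\<^sub>0) \<ge> - (sqrt \<mu> - r) * (R - r)"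
      using inner_subdiff_gfun_inside_ge assms(6) False by (simp add: r_def R_def)
    moreover have "(1 - b) * d\<^sup>2 = d\<^sup>2 - b * d\<^sup>2"
      by (simp add: left_diff_distrib)
    ultimately show ?thesis
      unfolding d_def[symmetric] split by linarith
  qed
qed

theorem lemma4p3:
  fixes \<mu> \<beta> :: real and x0 z0 :: complex
  assumes "\<mu> > 0" and "0 < \<beta>" and "\<beta> < 1"
    and "z0 \<in> subdiff (gfun \<mu>) x0"
    and "cmod z0 > sqrt \<mu> / \<beta>^2"
  shows "\<forall>x1 z1. x1 \<noteq> x0 \<longrightarrow> z1 \<in> subdiff (gfun \<mu>) x1 \<longrightarrow>
           Re ((z1 - z0) * cnj (x1 - x0)) > (1 - \<beta>^2) * (cmod (x1 - x0))^2"
proof (intro allI impI)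
  fix x1 z1
  assume "x1 \<noteq> x0" "z1 \<in> subdiff (gfun \<mu>) x1"
  have \<beta>: "0 < \<beta>\<^sup>2" "\<beta>\<^sup>2 \<le> 1"
    using assms(2,3) by (simp_all add: power_le_one)
  have "sqrt \<mu> \<le> sqrt \<mu> / \<beta>\<^sup>2"
    using \<beta> assms(1) by (simp add: le_divide_eq)
  then have "\<not> cmod z0 \<le> sqrt \<mu>"
    using assms(5) by linarith
  then have "cmod x0 \<ge> sqrt \<mu>"
    using norm_subdiff_gfun_inside assms(4) by (meson not_le)
  then have "z0 = x0"
    using subdiff_gfun_outer assms(1,4) by (meson less_imp_le)
  moreover have "\<beta>\<^sup>2 * cmod x0 > sqrt \<mu>"
    using assms(5) \<beta> \<open>z0 = x0\<close> by (simp add: divide_less_eq mult.commute)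
  ultimately have "(z1 - z0) \<bullet> (x1 - x0) > (1 - \<beta>\<^sup>2) * (cmod (x1 - x0))\<^sup>2"
    using inner_subdiff_gfun_diff_gt[OF less_imp_le[OF assms(1)] \<beta> _ \<open>x1 \<noteq> x0\<close> \<open>z1 \<in> subdiff (gfun \<mu>) x1\<close>]
    by simp
  then show "Re ((z1 - z0) * cnj (x1 - x0)) > (1 - \<beta>\<^sup>2) * (cmod (x1 - x0))\<^sup>2"
    by (simp only: Re_mult_cnj_eq_inner)
qed

end
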